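(* Let $T$ be an anonymous, non-counterfactual, reasonable comparison test. If $T\not\sim\mathcal{D}$, then $T$ is not error-free.
   Context: Let $\Omega=\{0,1\}$ and let $\Omega^\infty$ be the set of infinite sequences $\omega=(\omega_1,\omega_2,\dots)$; $\omega^t=(\omega_1,\dots,\omega_t)$ denotes the prefix and also the cylinder set $\{\hat\omega:\hat\omega^t=\omega^t\}$; $\Omega^\infty$ carries the $\sigma$-algebra generated by cylinders. $\Delta(\Omega)$ is the set of probability distributions on $\Omega$. A forecasting strategy is a function $f:\bigcup_{t\ge 0}(\Omega\times\Delta(\Omega)\times\Delta(\Omega))^t\to\Delta(\Omega)$; $F$ is the set of all forecasting strategies. For $f=(f_0,f_1)$ and $\omega$, the play path $h=h(\omega,f_0,f_1)\in(\Omega\times\Delta(\Omega)\times\Delta(\Omega))^\infty$ is defined by $h^0=\emptyset$, $h^t=(h^{t-1},(\omega_t,f_0(h^{t-1}),f_1(h^{t-1})))$. The induced measures satisfy $P_i^f(\omega^t)=\prod_{n=1}^t f_i(h^{n-1})[\omega_n]$, $i\in\{0,1\}$. A comparison test is a function $T:\Omega^\infty\times F\times F\to\{0,\tfrac12,1\}$, measurable in $\omega$ for each fixed pair; write $\{T(\cdot,f)=k\}=\{\omega:T(\omega,f_0,f_1)=k\}$. $T$ is anonymous if $T(\omega,f_0,f_1)=1-T(\omega,f_1,f_0)$ always. $T$ is non-counterfactual if there is $\hat T:(\Omega\times\Delta(\Omega)\times\Delta(\Omega))^\infty\to\{0,\tfrac12,1\}$ with $T(\omega,f_0,f_1)=\hat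 T(h(\omega,f_0,f_1))$. $T$ is error-free if for all $f$ and $i\in\{0,1\}$, $P_{1-i}^f(\{T(\cdot,f)=i\})=0$. $T$ is reasonable if for all $f$, $i\in\{0,1\}$ and measurable $A$: $P_i^f(A)>0$ and $P_{1-i}^f(A)=0$ imply $P_i^f(A\cap\{T(\cdot,f)=i\})>0$. $T\sim\hat T$ means: for every pair $f$ and every $i\in\{0,1\}$, $P_i^f(\{\omega:T(\omega,f_0,f_1)\ne\hat T(\omega,f_0,f_1)\})=0$. Likelihood ratios along $h=h(\omega,f_0,f_1)$: $D^t_{f_0}f_1(\omega)=\prod_{n=1}^t \frac{f_1(h^{n-1})[\omega_n]}{f_0(h^{n-1})[\omega_n]}$ and $D^t_{f_1}f_0(\omega)=\prod_{n=1}^t \frac{f_0(h^{n-1})[\omega_n]}{f_1(h^{n-1})[\omega_n]}$. For $(j,k)\in\{(0,1),(1,0)\}$, $\overline{D}_{f_j}f_k=\limsup_t D^t_{f_j}f_k$ and $\underline{D}_{f_j}f_k=\liminf_t D^t_{f_j}f_k$ if $f_j(h^{n-1})[\omega_n]>0$ for all $n$, and both $=+\infty$ otherwise; if they coincide and are finite the common value is the derivative $D_{f_j}f_k(\omega)$. The derivative test: $\mathcal{D}(\omega,f_0,f_1)=1$ if $D_{f_1}f_0(\omega)$ exists and equals $0$; $=0$ if $D_{f_0}f_1(\omega)$ exists and equals $0$; $=\tfrac12$ otherwise. *)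

theory Defs
  imports "HOL-Probability.Probability"
begin

text \<open>Outcomes Omega = {0,1} are modelled by bool (True = 1); Delta(Omega) by bool pmf.
  Infinite sequences are nat => bool, with omega_1 = omega 0.\<close>

type_synonym hist_elem = "bool \<times> bool pmf \<times> bool pmf"
type_synonym strategy = "hist_elem list \<Rightarrow> bool pmf"

definition Seq :: "(nat \<Rightarrow> bool) measure" where
  "Seq = PiM UNIV (\<lambda>_. count_space UNIV)"

definition cyl :: "(nat \<Rightarrow> bool) \<Rightarrow> nat \<Rightarrow> (nat \<Rightarrow> bool) set" where
  "cyl \<omega> t = {\<omega>' \<in> space Seq. \<forall>n<t. \<omega>' n = \<omega> n}"

fun hist :: "strategy \<Rightarrow> strategy \<Rightarrow> (nat \<Rightarrow> bool) \<Rightarrow> nat \<Rightarrow> hist_elem list" where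
  "hist f0 f1 \<omega> 0 = []"
| "hist f0 f1 \<omega> (Suc t) = hist f0 f1 \<omega> t @ [(\<omega> t, f0 (hist f0 f1 \<omega> t), f1 (hist f0 f1 \<omega> t))]"

definition play :: "strategy \<Rightarrow> strategy \<Rightarrow> (nat \<Rightarrow> bool) \<Rightarrow> nat \<Rightarrow> hist_elem" where
  "play f0 f1 \<omega> n = (\<omega> n, f0 (hist f0 f1 \<omega> n), f1 (hist f0 f1 \<omega> n))"

definition sel :: "strategy \<Rightarrow> strategy \<Rightarrow> nat \<Rightarrow> strategy" where
  "sel f0 f1 i = (if i = 0 then f0 else f1)"

text \<open>The induced measure P_i^f: the probability measure on Seq with the prescribed
  cylinder probabilities (unique by the pi-lambda theorem).\<close>
definition Pf :: "strategy \<Rightarrow> strategy \<Rightarrow> nat \<Rightarrow> (nat \<Rightarrow> bool) measure" where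
  "Pf f0 f1 i = (THE M. sets M = sets Seq \<and> prob_space M \<and>
     (\<forall>\<omega> t. emeasure M (cyl \<omega> t) =
        ennreal (\<Prod>n<t. pmf (sel f0 f1 i (hist f0 f1 \<omega> n)) (\<omega> n))))"

definition Dt :: "strategy \<Rightarrow> strategy \<Rightarrow> nat \<Rightarrow> nat \<Rightarrow> (nat \<Rightarrow> bool) \<Rightarrow> nat \<Rightarrow> real" where
  "Dt f0 f1 j k \<omega> t = (\<Prod>n<t. pmf (sel f0 f1 k (hist f0 f1 \<omega> n)) (\<omega> n)
                              / pmf (sel f0 f1 j (hist f0 f1 \<omega> n)) (\<omega> n))"

definition upperD :: "strategy \<Rightarrow> strategy \<Rightarrow> nat \<Rightarrow> nat \<Rightarrow> (nat \<Rightarrow> bool) \<Rightarrow> ereal" where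
  "upperD f0 f1 j k \<omega> =
     (if \<forall>n. pmf (sel f0 f1 j (hist f0 f1 \<omega> n)) (\<omega> n) > 0
      then limsup (\<lambda>t. ereal (Dt f0 f1 j k \<omega> t)) else \<infinity>)"

definition lowerD :: "strategy \<Rightarrow> strategy \<Rightarrow> nat \<Rightarrow> nat \<Rightarrow> (nat \<Rightarrow> bool) \<Rightarrow> ereal" where
  "lowerD f0 f1 j k \<omega> =
     (if \<forall>n. pmf (sel f0 f1 j (hist f0 f1 \<omega> n)) (\<omega> n) > 0
      then liminf (\<lambda>t. ereal (Dt f0 f1 j k \<omega> t)) else \<infinity>)"

definition deriv_is :: "strategy \<Rightarrow> strategy \<Rightarrow> nat \<Rightarrow> nat \<Rightarrow> (nat \<Rightarrow> bool) \<Rightarrow> real \<Rightarrow> bool" where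
  "deriv_is f0 f1 j k \<omega> x \<longleftrightarrow>
     upperD f0 f1 j k \<omega> = lowerD f0 f1 j k \<omega> \<and> \<bar>upperD f0 f1 j k \<omega>\<bar> \<noteq> \<infinity> \<and>
     upperD f0 f1 j k \<omega> = ereal x"

definition derivTest :: "(nat \<Rightarrow> bool) \<Rightarrow> strategy \<Rightarrow> strategy \<Rightarrow> real" where
  "derivTest \<omega> f0 f1 =
     (if deriv_is f0 f1 1 0 \<omega> 0 then 1
      else if deriv_is f0 f1 0 1 \<omega> 0 then 0 else 1/2)"

type_synonym test = "(nat \<Rightarrow> bool) \<Rightarrow> strategy \<Rightarrow> strategy \<Rightarrow> real"

definition comparison_test :: "test \<Rightarrow> bool" where
  "comparison_test T \<longleftrightarrow>
     (\<forall>\<omega> f0 f1. T \<omega> f0 f1 \<in> {0, 1/2, 1}) \<and>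
     (\<forall>f0 f1. (\<lambda>\<omega>. T \<omega> f0 f1) \<in> borel_measurable Seq)"

definition anonymous :: "test \<Rightarrow> bool" where
  "anonymous T \<longleftrightarrow> (\<forall>\<omega> f0 f1. T \<omega> f0 f1 = 1 - T \<omega> f1 f0)"

definition non_counterfactual :: "test \<Rightarrow> bool" where
  "non_counterfactual T \<longleftrightarrow>
     (\<exists>Th :: (nat \<Rightarrow> hist_elem) \<Rightarrow> real. (\<forall>h. Th h \<in> {0, 1/2, 1}) \<and>
        (\<forall>\<omega> f0 f1. T \<omega> f0 f1 = Th (play f0 f1 \<omega>)))"

definition error_free :: "test \<Rightarrow> bool" where
  "error_free T \<longleftrightarrow>
     (\<forall>f0 f1 i. i \<le> 1 \<longrightarrow>
        emeasure (Pf f0 f1 (1 - i)) {\<omega> \<in> space Seq. T \<omega> f0 f1 = real i} = 0)"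

definition reasonable :: "test \<Rightarrow> bool" where
  "reasonable T \<longleftrightarrow>
     (\<forall>f0 f1 i A. i \<le> 1 \<longrightarrow> A \<in> sets Seq \<longrightarrow>
        emeasure (Pf f0 f1 i) A > 0 \<longrightarrow> emeasure (Pf f0 f1 (1 - i)) A = 0 \<longrightarrow>
        emeasure (Pf f0 f1 i) (A \<inter> {\<omega> \<in> space Seq. T \<omega> f0 f1 = real i}) > 0)"

definition test_equiv :: "test \<Rightarrow> test \<Rightarrow> bool" where
  "test_equiv T T' \<longleftrightarrow>
     (\<forall>f0 f1 i. i \<le> 1 \<longrightarrow>
        emeasure (Pf f0 f1 i) {\<omega> \<in> space Seq. T \<omega> f0 f1 \<noteq> T' \<omega> f0 f1} = 0)"

end

theory Submission
  imports Defs
begin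

text \<open>Fix forecasts \<open>f\<close> and an index \<open>i\<close>, and let \<open>P = P_i\<close>, \<open>R = P_(1-i)\<close>. Under \<open>P\<close> the
  likelihood ratio of \<open>R\<close> to \<open>P\<close> along the observed prefix is a nonnegative martingale, so by
  Ville's maximal inequality it stays bounded \<open>P\<close>-almost surely; hence \<open>D_(f_(1-i)) f_i = 0\<close> is a
  \<open>P\<close>-null event. If \<open>R A = 0\<close>, approximating \<open>A\<close> by an event observable at a finite time and
  applying Ville's inequality after that time shows that the ratio tends to \<open>0\<close> \<open>P\<close>-almost surely
  on \<open>A\<close>, i.e. \<open>D_(f_i) f_(1-i) = 0\<close> there.
  An error-free test has \<open>R {T = i} = 0\<close> and \<open>P {T = 1-i} = 0\<close>, so \<open>P\<close>-almost surely the derivative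
  test also returns \<open>i\<close> where \<open>T\<close> does. Conversely, the event where \<open>T \<noteq> i\<close> but
  \<open>D_(f_i) f_(1-i) = 0\<close> is \<open>R\<close>-null, so reasonableness makes it \<open>P\<close>-null; thus \<open>T = 1/2\<close> exactly where
  the derivative test is undecided, \<open>P\<close>-almost surely.\<close>

lemma space_Seq [simp]: "space Seq = UNIV"
  by (simp add: Seq_def space_PiM)

lemma mem_cyl_iff [simp]: "\<omega>' \<in> cyl \<omega> t \<longleftrightarrow> (\<forall>n<t. \<omega>' n = \<omega> n)"
  by (simp add: cyl_def)

lemma cyl_eq_iff_mem: "cyl \<omega>' t = cyl \<omega> t \<longleftrightarrow> \<omega>' \<in> cyl \<omega> t"
  by (auto simp: set_eq_iff)

lemma cyl_mono: "s \<le> t \<Longrightarrow> cyl \<omega> t \<subseteq> cyl \<omega> s"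
  by auto

lemma cyl_eq_map: "cyl \<omega> t = {\<omega>'. map \<omega>' [0..<t] = map \<omega> [0..<t]}"
  by (auto simp: map_eq_conv)

lemma finite_cyls: "finite ((\<lambda>\<omega>. cyl \<omega> t) ` B)"
proof -
  have "(\<lambda>\<omega>. cyl \<omega> t) = (\<lambda>xs. {\<omega>'. map \<omega>' [0..<t] = xs}) \<circ> (\<lambda>\<omega>. map \<omega> [0..<t])"
    by (simp only: cyl_eq_map comp_def)
  moreover have "finite ((\<lambda>\<omega>. map \<omega> [0..<t]) ` B)"
    by (rule finite_subset[OF _ finite_lists_length_eq[of "UNIV :: bool set" t]]) auto
  ultimately show ?thesis
    by (metis finite_imageI image_comp)
qed

lemma disjoint_cyls: "disjoint_family_on (\<lambda>C. C) ((\<lambda>\<omega>. cyl \<omega> t) ` B)"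
  unfolding disjoint_family_on_def
proof (intro ballI impI equals0I)
  fix C D x assume "C \<in> (\<lambda>\<omega>. cyl \<omega> t) ` B" "D \<in> (\<lambda>\<omega>. cyl \<omega> t) ` B" "C \<noteq> D" "x \<in> C \<inter> D"
  then show False
    using cyl_eq_iff_mem by (metis IntD1 IntD2 imageE)
qed

lemma sets_Seq_coordinate: "{\<omega>. \<omega> n = b} \<in> sets Seq"
proof -
  have "(\<lambda>\<omega>. \<omega> n) \<in> measurable Seq (count_space UNIV)"
    unfolding Seq_def by (rule measurable_component_singleton) simp
  from measurable_sets[OF this, of "{b}"] show ?thesis
    by (simp add: vimage_def)
qed

lemma sets_Seq_cyl [measurable]: "cyl \<omega> t \<in> sets Seq"
proof (induction t)
  case (Suc t)
  have "cyl \<omega> (Suc t) = cyl \<omega> t \<inter> {\<omega>'. \<omega>' t = \<omega> t}"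
    by (auto simp: less_Suc_eq)
  with Suc sets_Seq_coordinate show ?case
    by simp
qed (simp add: cyl_def sets.top[of Seq, simplified])

definition prefix_determined :: "nat \<Rightarrow> (nat \<Rightarrow> bool) set \<Rightarrow> bool" where
  "prefix_determined t B \<longleftrightarrow> (\<forall>\<omega>\<in>B. cyl \<omega> t \<subseteq> B)"

lemma prefix_determined_eq_Union_cyls:
  "prefix_determined t B \<Longrightarrow> B = \<Union>((\<lambda>\<omega>. cyl \<omega> t) ` B)"
  by (force simp: prefix_determined_def)

lemma prefix_determined_mono: "prefix_determined s B \<Longrightarrow> s \<le> t \<Longrightarrow> prefix_determined t B"
  unfolding prefix_determined_def using cyl_mono by blast

lemma prefix_determined_Int:
  "prefix_determined t A \<Longrightarrow> prefix_determined t B \<Longrightarrow> prefix_determined t (A \<inter> B)"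
  unfolding prefix_determined_def by blast

lemma prefix_determined_UN:
  "(\<And>i. i \<in> I \<Longrightarrow> prefix_determined t (B i)) \<Longrightarrow> prefix_determined t (\<Union>i\<in>I. B i)"
  unfolding prefix_determined_def by blast

lemma prefix_determined_Compl: "prefix_determined t B \<Longrightarrow> prefix_determined t (- B)"
  unfolding prefix_determined_def
proof (intro ballI subsetI)
  fix \<omega> \<omega>' assume "\<forall>\<omega>\<in>B. cyl \<omega> t \<subseteq> B" "\<omega> \<in> - B" "\<omega>' \<in> cyl \<omega> t"
  then show "\<omega>' \<in> - B"
    by (metis ComplD ComplI cyl_eq_iff_mem subsetD)
qed

lemma prefix_determined_Diff:
  "prefix_determined t A \<Longrightarrow> prefix_determined t B \<Longrightarrow> prefix_determined t (A - B)"
  using prefix_determined_Int prefix_determined_Compl by (simp add: Diff_eq)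

lemma prefix_determined_empty: "prefix_determined t {}"
  and prefix_determined_UNIV: "prefix_determined t UNIV"
  by (auto simp: prefix_determined_def)

lemma sets_Seq_prefix_determined: "prefix_determined t B \<Longrightarrow> B \<in> sets Seq"
  by (subst prefix_determined_eq_Union_cyls) (auto intro!: sets.finite_Union finite_cyls)

lemma emeasure_prefix_determined:
  assumes "sets M = sets Seq" "prefix_determined t B"
  shows "emeasure M B = (\<Sum>C\<in>(\<lambda>\<omega>. cyl \<omega> t) ` B. emeasure M C)"
proof -
  have "emeasure M B = emeasure M (\<Union>C\<in>(\<lambda>\<omega>. cyl \<omega> t) ` B. C)"
    using prefix_determined_eq_Union_cyls[OF assms(2)] by simp
  also have "\<dots> = (\<Sum>C\<in>(\<lambda>\<omega>. cyl \<omega> t) ` B. emeasure M C)"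
    by (rule sum_emeasure[symmetric]) (auto simp: assms(1) finite_cyls disjoint_cyls)
  finally show ?thesis .
qed

lemma emeasure_prefix_determined_le:
  assumes "sets P = sets Seq" "sets Q = sets Seq" "prefix_determined t B"
    and "\<And>\<omega>. \<omega> \<in> B \<Longrightarrow> c * emeasure P (cyl \<omega> t) \<le> emeasure Q (cyl \<omega> t)"
  shows "c * emeasure P B \<le> emeasure Q B"
  unfolding emeasure_prefix_determined[OF assms(1,3)] emeasure_prefix_determined[OF assms(2,3)]
  unfolding sum_distrib_left by (rule sum_mono) (auto intro: assms(4))

lemma prefix_determined_hit_before:
  assumes "\<And>s. prefix_determined s (G s)" "prefix_determined t B"
  shows "prefix_determined (t + d) (B \<inter> (\<Union>s\<in>{t..t + d}. G s))"
proof (intro prefix_determined_Int prefix_determined_UN)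
  show "prefix_determined (t + d) B"
    using assms(2) by (rule prefix_determined_mono) simp
  show "prefix_determined (t + d) (G s)" if "s \<in> {t..t + d}" for s
    using assms(1) by (rule prefix_determined_mono) (use that in simp)
qed

lemma ville_inequality_finite:
  assumes sets_P: "sets P = sets Seq" and sets_Q: "sets Q = sets Seq"
    and G: "\<And>s. prefix_determined s (G s)"
    and G_le: "\<And>\<omega> s. \<omega> \<in> G s \<Longrightarrow> c * emeasure P (cyl \<omega> s) \<le> emeasure Q (cyl \<omega> s)"
  shows "prefix_determined t B \<Longrightarrow>
    c * emeasure P (B \<inter> (\<Union>s\<in>{t..t + d}. G s)) \<le> emeasure Q (B \<inter> (\<Union>s\<in>{t..t + d}. G s))"
proof (induction d arbitrary: t B)
  case 0
  have "B \<inter> (\<Union>s\<in>{t..t + 0}. G s) = B \<inter> G t"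
    by simp
  moreover have "c * emeasure P (B \<inter> G t) \<le> emeasure Q (B \<inter> G t)"
    using prefix_determined_Int[OF 0 G] G_le
    by (rule emeasure_prefix_determined_le[OF sets_P sets_Q]) blast
  ultimately show ?case
    by simp
next
  case (Suc d)
  let ?now = "B \<inter> G t" and ?later = "(B - G t) \<inter> (\<Union>s\<in>{Suc t..Suc t + d}. G s)"
  have "{t..t + Suc d} = insert t {Suc t..Suc t + d}"
    by auto
  then have split: "B \<inter> (\<Union>s\<in>{t..t + Suc d}. G s) = ?now \<union> ?later"
    by (simp only: image_insert Union_insert) blast
  have now: "prefix_determined t ?now"
    using Suc.prems G by (rule prefix_determined_Int)
  have later_B: "prefix_determined (Suc t) (B - G t)"
    by (intro prefix_determined_Diff prefix_determined_mono[OF Suc.prems]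
        prefix_determined_mono[OF G]) simp_all
  then have later: "prefix_determined (Suc t + d) ?later"
    by (rule prefix_determined_hit_before[OF G])
  have measurable: "?now \<in> sets Seq" "?later \<in> sets Seq"
    using now later by (auto intro: sets_Seq_prefix_determined)
  have disjoint: "?now \<inter> ?later = {}"
    by blast
  have "c * emeasure P (?now \<union> ?later) = c * emeasure P ?now + c * emeasure P ?later"
    using measurable disjoint by (simp add: sets_P distrib_left flip: plus_emeasure)
  also have "\<dots> \<le> emeasure Q ?now + emeasure Q ?later"
    by (intro add_mono emeasure_prefix_determined_le[OF sets_P sets_Q now] Suc.IH[OF later_B])
      (auto intro: G_le)
  also have "\<dots> = emeasure Q (?now \<union> ?later)"
    using measurable disjoint by (simp add: sets_Q flip: plus_emeasure)
  finally show ?case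
    unfolding split .
qed

text \<open>Ville's maximal inequality, phrased without densities: \<open>G s\<close> is the event that the ratio
  of \<open>Q\<close> to \<open>P\<close> has reached \<open>c\<close> at time \<open>s\<close>.\<close>
lemma ville_inequality:
  assumes sets_P: "sets P = sets Seq" and sets_Q: "sets Q = sets Seq"
    and G: "\<And>s. prefix_determined s (G s)"
    and G_le: "\<And>\<omega> s. \<omega> \<in> G s \<Longrightarrow> c * emeasure P (cyl \<omega> s) \<le> emeasure Q (cyl \<omega> s)"
    and B: "prefix_determined t B"
  shows "c * emeasure P (B \<inter> (\<Union>s\<in>{t..}. G s)) \<le> emeasure Q B"
proof -
  let ?H = "\<lambda>d. B \<inter> (\<Union>s\<in>{t..t + d}. G s)"
  have H: "range ?H \<subseteq> sets P" "incseq ?H" "(\<Union>d. ?H d) = B \<inter> (\<Union>s\<in>{t..}. G s)"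
    using sets_Seq_prefix_determined[OF prefix_determined_hit_before[OF G B]]
    by (auto simp: sets_P intro!: incseq_SucI) (force, meson atLeastAtMost_iff le_add2)
  have "emeasure P (B \<inter> (\<Union>s\<in>{t..}. G s)) = (SUP d. emeasure P (?H d))"
    by (simp only: SUP_emeasure_incseq[OF H(1,2)] H(3))
  then have "c * emeasure P (B \<inter> (\<Union>s\<in>{t..}. G s)) = (SUP d. c * emeasure P (?H d))"
    by (simp add: SUP_mult_left_ennreal)
  also have "\<dots> \<le> emeasure Q B"
  proof (rule SUP_least)
    fix d
    have "c * emeasure P (?H d) \<le> emeasure Q (?H d)"
      by (rule ville_inequality_finite[OF sets_P sets_Q G G_le B])
    also have "\<dots> \<le> emeasure Q B"
      by (rule emeasure_mono) (auto simp: sets_Q intro: sets_Seq_prefix_determined[OF B])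
    finally show "c * emeasure P (?H d) \<le> emeasure Q B" .
  qed
  finally show ?thesis .
qed

lemma prefix_determined_prod_emb:
  assumes "J \<subseteq> {..<t}"
  shows "prefix_determined t (prod_emb UNIV (\<lambda>_. count_space UNIV) J (Pi\<^sub>E J E))"
  unfolding prefix_determined_def
proof (intro ballI subsetI)
  fix \<omega> \<omega>' assume \<omega>: "\<omega> \<in> prod_emb UNIV (\<lambda>_. count_space UNIV) J (Pi\<^sub>E J E)"
    and "\<omega>' \<in> cyl \<omega> t"
  with assms have "restrict \<omega>' J = restrict \<omega> J"
    by (auto simp: restrict_def)
  with \<omega> show "\<omega>' \<in> prod_emb UNIV (\<lambda>_. count_space UNIV) J (Pi\<^sub>E J E)"
    by (simp add: prod_emb_iff)
qed

lemma measure_sym_diff_Union_lessThan: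
  fixes a b :: "nat \<Rightarrow> 'a set"
  assumes "finite_measure M" "range a \<subseteq> sets M" "range b \<subseteq> sets M" "0 < K"
    and "measure M ((\<Union>i. a i) - (\<Union>i<K. a i)) < e / 2"
    and "\<And>i. i < K \<Longrightarrow> measure M (sym_diff (a i) (b i)) < e / (2 * real K)"
  shows "measure M (sym_diff (\<Union>i. a i) (\<Union>i<K. b i)) < e"
proof -
  interpret finite_measure M by fact
  let ?tail = "(\<Union>i. a i) - (\<Union>i<K. a i)" and ?errs = "\<Union>i<K. sym_diff (a i) (b i)"
  have sets: "?tail \<in> sets M" "?errs \<in> sets M"
    using assms(2,3) by auto
  have "measure M (sym_diff (\<Union>i. a i) (\<Union>i<K. b i)) \<le> measure M (?tail \<union> ?errs)"
    using sets by (intro finite_measure_mono) auto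
  also have "\<dots> \<le> measure M ?tail + (\<Sum>i<K. measure M (sym_diff (a i) (b i)))"
    using sets assms(2,3)
    by (intro order_trans[OF measure_Un_le] add_left_mono finite_measure_subadditive_finite) auto
  also have "\<dots> < e / 2 + (\<Sum>i<K. e / (2 * real K))"
    using assms(4-6) by (intro add_strict_mono sum_strict_mono) auto
  also have "\<dots> = e"
    using assms(4) by simp
  finally show ?thesis .
qed

lemma sets_Seq_eq_sigma_sets:
  "sets Seq = sigma_sets UNIV (prod_algebra UNIV (\<lambda>_ :: nat. count_space (UNIV :: bool set)))"
  by (simp add: Seq_def sets_PiM)

definition prefix_approximable :: "(nat \<Rightarrow> bool) measure set \<Rightarrow> (nat \<Rightarrow> bool) set \<Rightarrow> bool" where
  "prefix_approximable Ms A \<longleftrightarrow>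
    (\<forall>e>0. \<exists>t B. prefix_determined t B \<and> (\<forall>M\<in>Ms. measure M (sym_diff A B) < e))"

lemma prefix_approximable_prefix_determined: "prefix_determined t A \<Longrightarrow> prefix_approximable Ms A"
  unfolding prefix_approximable_def by (metis Diff_cancel Un_absorb measure_empty)

lemma prefix_approximable_Compl: "prefix_approximable Ms A \<Longrightarrow> prefix_approximable Ms (- A)"
  unfolding prefix_approximable_def
proof (intro allI impI)
  fix e :: real assume "\<forall>e>0. \<exists>t B. prefix_determined t B \<and> (\<forall>M\<in>Ms. measure M (sym_diff A B) < e)" "0 < e"
  then obtain t B where "prefix_determined t B" "\<forall>M\<in>Ms. measure M (sym_diff A B) < e"
    by blast
  moreover have "sym_diff (- A) (- B) = sym_diff A B"
    by blast
  ultimately show "\<exists>t B. prefix_determined t B \<and> (\<forall>M\<in>Ms. measure M (sym_diff (- A) B) < e)"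
    using prefix_determined_Compl by metis
qed

lemma eventually_measure_Union_minus_lessThan:
  assumes "finite Ms" "\<And>M. M \<in> Ms \<Longrightarrow> finite_measure M" "\<And>M. M \<in> Ms \<Longrightarrow> range a \<subseteq> sets M"
    and "0 < e"
  shows "\<forall>\<^sub>F K in sequentially. \<forall>M\<in>Ms. measure M ((\<Union>i. a i) - (\<Union>i<K. a i)) < e"
  using \<open>finite Ms\<close>
proof (rule eventually_ball_finite, intro ballI)
  fix M assume "M \<in> Ms"
  interpret finite_measure M
    using assms(2)[OF \<open>M \<in> Ms\<close>] .
  have "(\<lambda>K. measure M ((\<Union>i. a i) - (\<Union>i<K. a i))) \<longlonglongrightarrow> measure M (\<Inter>K. (\<Union>i. a i) - (\<Union>i<K. a i))"
    using assms(3)[OF \<open>M \<in> Ms\<close>] by (intro finite_Lim_measure_decseq) (auto simp: decseq_def)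
  moreover have "(\<Inter>K. (\<Union>i. a i) - (\<Union>i<K. a i)) = {}"
    by blast
  ultimately have "(\<lambda>K. measure M ((\<Union>i. a i) - (\<Union>i<K. a i))) \<longlonglongrightarrow> 0"
    by (simp only: measure_empty)
  then show "\<forall>\<^sub>F K in sequentially. measure M ((\<Union>i. a i) - (\<Union>i<K. a i)) < e"
    by (rule order_tendstoD(2)) (use \<open>0 < e\<close> in simp)
qed

lemma prefix_approximable_Union:
  fixes a :: "nat \<Rightarrow> (nat \<Rightarrow> bool) set"
  assumes "finite Ms" and Ms: "\<And>M. M \<in> Ms \<Longrightarrow> finite_measure M \<and> sets M = sets Seq"
    and a: "range a \<subseteq> sets Seq" "\<And>i. prefix_approximable Ms (a i)"
  shows "prefix_approximable Ms (\<Union>i. a i)"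
  unfolding prefix_approximable_def
proof (intro allI impI)
  fix e :: real assume "0 < e"
  have "\<forall>\<^sub>F K in sequentially. 0 < K \<and> (\<forall>M\<in>Ms. measure M ((\<Union>i. a i) - (\<Union>i<K. a i)) < e / 2)"
    using assms \<open>0 < e\<close>
    by (intro eventually_conj eventually_gt_at_top eventually_measure_Union_minus_lessThan) auto
  then obtain K where K: "0 < K" "\<And>M. M \<in> Ms \<Longrightarrow> measure M ((\<Union>i. a i) - (\<Union>i<K. a i)) < e / 2"
    by (auto simp: eventually_sequentially)
  have "0 < e / (2 * real K)"
    using \<open>0 < e\<close> K(1) by simp
  with a(2) have "\<forall>i. \<exists>t B. prefix_determined t B \<and>
      (\<forall>M\<in>Ms. measure M (sym_diff (a i) B) < e / (2 * real K))"
    unfolding prefix_approximable_def by blast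
  then obtain t b where b: "\<And>i. prefix_determined (t i) (b i)"
    "\<And>i M. M \<in> Ms \<Longrightarrow> measure M (sym_diff (a i) (b i)) < e / (2 * real K)"
    by metis
  have "prefix_determined (\<Sum>i<K. t i) (\<Union>i<K. b i)"
    using b(1) by (intro prefix_determined_UN prefix_determined_mono[OF b(1)] member_le_sum) auto
  moreover have "range b \<subseteq> sets Seq"
    using b(1) sets_Seq_prefix_determined by blast
  ultimately show "\<exists>t B. prefix_determined t B \<and> (\<forall>M\<in>Ms. measure M (sym_diff (\<Union>i. a i) B) < e)"
    using a(1) Ms K by (metis measure_sym_diff_Union_lessThan b(2))
qed

lemma prefix_approximable:
  assumes "finite Ms" "\<And>M. M \<in> Ms \<Longrightarrow> finite_measure M \<and> sets M = sets Seq"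
    and "A \<in> sets Seq"
  shows "prefix_approximable Ms A"
  using \<open>A \<in> sets Seq\<close> unfolding sets_Seq_eq_sigma_sets
proof (induction rule: sigma_sets.induct)
  case (Basic a)
  then obtain J E where a: "a = prod_emb UNIV (\<lambda>_. count_space UNIV) J (Pi\<^sub>E J E)" and "finite J"
    by (auto elim!: prod_algebraE)
  then obtain t where "J \<subseteq> {..<t}"
    using finite_nat_bounded by blast
  then show ?case
    unfolding a by (intro prefix_approximable_prefix_determined prefix_determined_prod_emb)
next
  case Empty
  show ?case
    using prefix_determined_empty by (rule prefix_approximable_prefix_determined)
next
  case (Compl a)
  then show ?case
    by (simp add: prefix_approximable_Compl flip: Compl_eq_Diff_UNIV)
next
  case (Union a)
  then show ?case
    using assms(1,2) by (intro prefix_approximable_Union) (auto simp: sets_Seq_eq_sigma_sets)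
qed

lemma prefix_determined_cyl_pred: "prefix_determined s {\<omega>. R (cyl \<omega> s)}"
  unfolding prefix_determined_def
proof (intro ballI subsetI)
  fix \<omega> \<omega>' assume "\<omega> \<in> {\<omega>. R (cyl \<omega> s)}" "\<omega>' \<in> cyl \<omega> s"
  moreover from this(2) have "cyl \<omega>' s = cyl \<omega> s"
    by (simp only: cyl_eq_iff_mem)
  ultimately show "\<omega>' \<in> {\<omega>. R (cyl \<omega> s)}"
    by simp
qed

lemma sets_Seq_cyl_pred [measurable]: "{\<omega>. R (cyl \<omega> s)} \<in> sets Seq"
  by (rule sets_Seq_prefix_determined[OF prefix_determined_cyl_pred])

lemma AE_emeasure_cyl_neq_0:
  assumes "sets P = sets Seq"
  shows "AE \<omega> in P. \<forall>s. emeasure P (cyl \<omega> s) \<noteq> 0"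
proof (subst AE_all_countable, intro allI AE_I')
  fix s
  let ?N = "{\<omega>. emeasure P (cyl \<omega> s) = 0}"
  have "emeasure P ?N = 0"
    by (subst emeasure_prefix_determined[OF assms prefix_determined_cyl_pred])
      (auto intro!: sum.neutral)
  then show "?N \<in> null_sets P"
    by (simp add: null_sets_def assms)
qed auto

text \<open>The likelihood ratio of \<open>Q\<close> to \<open>P\<close> along \<open>\<omega>\<close> at time \<open>s\<close> is
  \<open>emeasure Q (cyl \<omega> s) / emeasure P (cyl \<omega> s)\<close>; these two events say that it is unbounded,
  resp. infinitely often at least \<open>c\<close>, stated without dividing.\<close>
definition cyl_ratio_unbounded ::
    "(nat \<Rightarrow> bool) measure \<Rightarrow> (nat \<Rightarrow> bool) measure \<Rightarrow> (nat \<Rightarrow> bool) set" where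
  "cyl_ratio_unbounded P Q =
    {\<omega>. \<forall>M::nat. \<exists>s. of_nat M * emeasure P (cyl \<omega> s) \<le> emeasure Q (cyl \<omega> s)}"

definition cyl_ratio_often_ge ::
    "real \<Rightarrow> (nat \<Rightarrow> bool) measure \<Rightarrow> (nat \<Rightarrow> bool) measure \<Rightarrow> (nat \<Rightarrow> bool) set" where
  "cyl_ratio_often_ge c P Q =
    {\<omega>. \<forall>n. \<exists>s\<ge>n. ennreal c * emeasure P (cyl \<omega> s) \<le> emeasure Q (cyl \<omega> s)}"

lemma sets_Seq_cyl_ratio_unbounded [measurable]: "cyl_ratio_unbounded P Q \<in> sets Seq"
proof -
  have "cyl_ratio_unbounded P Q =
      (\<Inter>M::nat. \<Union>s. {\<omega>. of_nat M * emeasure P (cyl \<omega> s) \<le> emeasure Q (cyl \<omega> s)})"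
    by (auto simp: cyl_ratio_unbounded_def)
  then show ?thesis
    by simp
qed

lemma sets_Seq_cyl_ratio_often_ge [measurable]: "cyl_ratio_often_ge c P Q \<in> sets Seq"
proof -
  have "cyl_ratio_often_ge c P Q =
      (\<Inter>n. \<Union>s\<in>{n..}. {\<omega>. ennreal c * emeasure P (cyl \<omega> s) \<le> emeasure Q (cyl \<omega> s)})"
    by (auto simp: cyl_ratio_often_ge_def)
  then show ?thesis
    by simp
qed

lemma ennreal_eq_0_if_of_nat_mult_bounded:
  fixes x C :: ennreal
  assumes "\<And>M::nat. of_nat M * x \<le> C" and "C \<noteq> \<top>"
  shows "x = 0"
proof -
  have "\<top> * x = (SUP M::nat. of_nat M * x)"
    by (simp only: ennreal_SUP_of_nat_eq_top[symmetric] SUP_mult_right_ennreal)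
  also have "\<dots> \<le> C"
    using assms(1) by (rule SUP_least)
  finally show ?thesis
    using assms(2) by (auto simp: ennreal_top_mult top_unique split: if_splits)
qed

lemma emeasure_cyl_ratio_unbounded:
  assumes sets_P: "sets P = sets Seq" and sets_Q: "sets Q = sets Seq" and "finite_measure Q"
  shows "emeasure P (cyl_ratio_unbounded P Q) = 0"
proof (rule ennreal_eq_0_if_of_nat_mult_bounded)
  fix M :: nat
  let ?G = "\<lambda>s. {\<omega>. of_nat M * emeasure P (cyl \<omega> s) \<le> emeasure Q (cyl \<omega> s)}"
  have "of_nat M * emeasure P (cyl_ratio_unbounded P Q) \<le>
      of_nat M * emeasure P (UNIV \<inter> (\<Union>s\<in>{0..}. ?G s))"
    by (intro mult_left_mono emeasure_mono) (auto simp: sets_P cyl_ratio_unbounded_def)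
  also have "\<dots> \<le> emeasure Q UNIV"
    by (intro ville_inequality[OF sets_P sets_Q prefix_determined_cyl_pred]
        prefix_determined_UNIV) auto
  finally show "of_nat M * emeasure P (cyl_ratio_unbounded P Q) \<le> emeasure Q UNIV" .
  show "emeasure Q UNIV \<noteq> \<top>"
    using finite_measure.emeasure_finite[OF \<open>finite_measure Q\<close>, of "space Q"]
    by (simp add: sets_eq_imp_space_eq[OF sets_Q])
qed

lemma emeasure_Int_cyl_ratio_often_ge_le:
  assumes sets_P: "sets P = sets Seq" and sets_Q: "sets Q = sets Seq" and B: "prefix_determined t B"
  shows "ennreal c * emeasure P (B \<inter> cyl_ratio_often_ge c P Q) \<le> emeasure Q B"
proof -
  let ?G = "\<lambda>s. {\<omega>. ennreal c * emeasure P (cyl \<omega> s) \<le> emeasure Q (cyl \<omega> s)}"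
  have "ennreal c * emeasure P (B \<inter> cyl_ratio_often_ge c P Q) \<le>
      ennreal c * emeasure P (B \<inter> (\<Union>s\<in>{t..}. ?G s))"
    using sets_Seq_prefix_determined[OF B]
    by (intro mult_left_mono emeasure_mono) (auto simp: sets_P cyl_ratio_often_ge_def)
  also have "\<dots> \<le> emeasure Q B"
    by (intro ville_inequality[OF sets_P sets_Q prefix_determined_cyl_pred _ B]) auto
  finally show ?thesis .
qed

text \<open>The proof approximates \<open>A\<close> by an event observable at some time \<open>t\<close> and applies Ville's
  inequality after time \<open>t\<close>.\<close>
lemma emeasure_cyl_ratio_often_ge_on_null_set:
  assumes sets_P: "sets P = sets Seq" and sets_Q: "sets Q = sets Seq"
    and "finite_measure P" "finite_measure Q"
    and A: "A \<in> sets Seq" "emeasure Q A = 0" and "0 < c"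
  shows "emeasure P (A \<inter> cyl_ratio_often_ge c P Q) = 0"
proof -
  interpret P: finite_measure P by fact
  interpret Q: finite_measure Q by fact
  let ?often = "cyl_ratio_often_ge c P Q"
  have bound: "measure P (A \<inter> ?often) < e * (1 + 1 / c)" if "0 < e" for e
  proof -
    have "prefix_approximable {P, Q} A"
      using assms by (intro prefix_approximable) auto
    with \<open>0 < e\<close> have "\<exists>t B. prefix_determined t B \<and> (\<forall>M\<in>{P, Q}. measure M (sym_diff A B) < e)"
      unfolding prefix_approximable_def by blast
    then obtain t B where B: "prefix_determined t B" "measure P (sym_diff A B) < e"
      "measure Q (sym_diff A B) < e"
      by auto
    have sets: "B \<in> sets Seq" "sym_diff A B \<in> sets Seq"
      using sets_Seq_prefix_determined[OF B(1)] A by auto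
    let ?H = "B \<inter> ?often"
    have "ennreal (c * measure P ?H) = ennreal c * emeasure P ?H"
      using \<open>0 < c\<close> by (simp add: ennreal_mult P.emeasure_eq_measure)
    also have "\<dots> \<le> emeasure Q B"
      by (rule emeasure_Int_cyl_ratio_often_ge_le[OF sets_P sets_Q B(1)])
    finally have "c * measure P ?H \<le> measure Q B"
      by (simp add: Q.emeasure_eq_measure)
    also have "\<dots> \<le> measure Q (sym_diff A B) + measure Q A"
      using sets A(1) by (intro order_trans[OF Q.finite_measure_mono measure_Un_le]) (auto simp: sets_Q)
    finally have "measure P ?H < e / c"
      using B(3) A(2) \<open>0 < c\<close> by (simp add: Q.emeasure_eq_measure field_simps)
    moreover have "measure P (A \<inter> ?often) \<le> measure P (sym_diff A B) + measure P ?H"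
      using sets A(1)
      by (intro order_trans[OF P.finite_measure_mono measure_Un_le]) (auto simp: sets_P)
    ultimately show ?thesis
      using B(2) by (simp add: field_simps)
  qed
  have "measure P (A \<inter> ?often) \<le> 0"
  proof (rule field_le_epsilon)
    fix \<epsilon> :: real assume "0 < \<epsilon>"
    have "0 < 1 + 1 / c"
      using \<open>0 < c\<close> by (simp add: add_pos_pos)
    with bound[of "\<epsilon> / (1 + 1 / c)"] \<open>0 < \<epsilon>\<close> show "measure P (A \<inter> ?often) \<le> 0 + \<epsilon>"
      by simp
  qed
  then show ?thesis
    using measure_nonneg[of P "A \<inter> ?often"] P.emeasure_eq_measure[of "A \<inter> ?often"] by simp
qed

lemma Seq_measure_eqI:
  assumes "sets M = sets Seq" "sets N = sets Seq" "finite_measure M"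
    and "\<And>\<omega> t. emeasure M (cyl \<omega> t) = emeasure N (cyl \<omega> t)"
  shows "M = N"
proof (rule measure_eqI_PiM_infinite[where I=UNIV and M="\<lambda>_. count_space UNIV"])
  show "sets M = sets (PiM UNIV (\<lambda>_::nat. count_space (UNIV :: bool set)))"
    "sets N = sets (PiM UNIV (\<lambda>_::nat. count_space (UNIV :: bool set)))"
    using assms(1,2) by (simp_all add: Seq_def)
  fix J :: "nat set" and E assume "finite J"
  then obtain t where "J \<subseteq> {..<t}"
    using finite_nat_bounded by blast
  then have "prefix_determined t (prod_emb UNIV (\<lambda>_. count_space UNIV) J (Pi\<^sub>E J E))"
    by (rule prefix_determined_prod_emb)
  then show "emeasure M (prod_emb UNIV (\<lambda>_. count_space UNIV) J (Pi\<^sub>E J E)) =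
      emeasure N (prod_emb UNIV (\<lambda>_. count_space UNIV) J (Pi\<^sub>E J E))"
    by (simp add: emeasure_prefix_determined[OF assms(1)] emeasure_prefix_determined[OF assms(2)])
      (auto intro!: sum.cong simp: assms(4))
qed fact

text \<open>A sequence of independent uniform variables \<open>u\<close> drives a path whose \<open>n\<close>-th bit is
  \<open>u n < Q \<omega> n {True}\<close>, where \<open>Q \<omega> n\<close> may depend on the bits already drawn.\<close>
primrec sample_prefix :: "((nat \<Rightarrow> bool) \<Rightarrow> nat \<Rightarrow> bool pmf) \<Rightarrow> (nat \<Rightarrow> real) \<Rightarrow> nat \<Rightarrow> nat \<Rightarrow> bool" where
  "sample_prefix Q u 0 = (\<lambda>_. False)"
| "sample_prefix Q u (Suc n) = (sample_prefix Q u n)(n := u n < pmf (Q (sample_prefix Q u n) n) True)"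

definition sample_path :: "((nat \<Rightarrow> bool) \<Rightarrow> nat \<Rightarrow> bool pmf) \<Rightarrow> (nat \<Rightarrow> real) \<Rightarrow> nat \<Rightarrow> bool" where
  "sample_path Q u n = sample_prefix Q u (Suc n) n"

lemma sample_prefix_eq_sample_path: "k < n \<Longrightarrow> sample_prefix Q u n k = sample_path Q u k"
  by (induction n) (auto simp: sample_path_def less_Suc_eq)

lemma sample_path_Suc:
  assumes Q: "\<And>\<omega> \<omega>' n. \<omega>' \<in> cyl \<omega> n \<Longrightarrow> Q \<omega>' n = Q \<omega> n"
  shows "sample_path Q u n = (u n < pmf (Q (sample_path Q u) n) True)"
proof -
  have "sample_path Q u \<in> cyl (sample_prefix Q u n) n"
    by (simp add: sample_prefix_eq_sample_path)
  then have "Q (sample_path Q u) n = Q (sample_prefix Q u n) n"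
    by (rule Q)
  then show ?thesis
    by (simp add: sample_path_def)
qed

lemma sample_path_in_cyl_iff:
  assumes Q: "\<And>\<omega> \<omega>' n. \<omega>' \<in> cyl \<omega> n \<Longrightarrow> Q \<omega>' n = Q \<omega> n"
  shows "sample_path Q u \<in> cyl \<omega> t \<longleftrightarrow> (\<forall>n<t. (u n < pmf (Q \<omega> n) True) = \<omega> n)"
proof (induction t)
  case (Suc t)
  have "sample_path Q u \<in> cyl \<omega> t \<Longrightarrow> Q (sample_path Q u) t = Q \<omega> t"
    by (rule Q)
  with Suc sample_path_Suc[OF Q, where u=u and n=t] show ?case
    by (auto simp: less_Suc_eq)
qed simp

definition uniform_seq :: "(nat \<Rightarrow> real) measure" where
  "uniform_seq = PiM UNIV (\<lambda>_. uniform_measure lborel {0..1})"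

lemma space_uniform_seq [simp]: "space uniform_seq = UNIV"
  by (simp add: uniform_seq_def space_PiM)

lemma prob_space_uniform_seq: "prob_space uniform_seq"
  unfolding uniform_seq_def by (intro prob_space_PiM prob_space_uniform_measure) auto

lemma emeasure_uniform_below:
  assumes "0 \<le> q" "q \<le> 1"
  shows "emeasure (uniform_measure lborel {0..1}) {x. (x < q) = b} = ennreal (if b then q else 1 - q)"
proof -
  have "{0..1} \<inter> {x. (x < q) = b} = (if b then {0..<q} else {q..1})"
    using assms by auto
  then show ?thesis
    using assms by (subst emeasure_uniform_measure) (auto simp: divide_ennreal_def)
qed

lemma vimage_sample_path_cyl:
  assumes Q: "\<And>\<omega> \<omega>' n. \<omega>' \<in> cyl \<omega> n \<Longrightarrow> Q \<omega>' n = Q \<omega> n"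
  shows "sample_path Q -` cyl \<omega> t \<inter> space uniform_seq =
    prod_emb UNIV (\<lambda>_. uniform_measure lborel {0..1}) {..<t}
      (\<Pi>\<^sub>E n\<in>{..<t}. {x. (x < pmf (Q \<omega> n) True) = \<omega> n})"
  using sample_path_in_cyl_iff[OF Q] by (auto simp: prod_emb_iff simp del: mem_cyl_iff)

lemma sets_vimage_sample_path_cyl:
  assumes Q: "\<And>\<omega> \<omega>' n. \<omega>' \<in> cyl \<omega> n \<Longrightarrow> Q \<omega>' n = Q \<omega> n"
  shows "sample_path Q -` cyl \<omega> t \<inter> space uniform_seq \<in> sets uniform_seq"
  by (subst vimage_sample_path_cyl[OF Q]) (auto simp: uniform_seq_def intro!: sets_PiM_I)

lemma measurable_sample_path:
  assumes Q: "\<And>\<omega> \<omega>' n. \<omega>' \<in> cyl \<omega> n \<Longrightarrow> Q \<omega>' n = Q \<omega> n"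
  shows "sample_path Q \<in> measurable uniform_seq Seq"
  unfolding Seq_def
proof (rule measurable_PiM_single')
  fix i :: nat
  show "(\<lambda>u. sample_path Q u i) \<in> measurable uniform_seq (count_space UNIV)"
    unfolding measurable_count_space_eq2_countable
  proof (intro conjI ballI)
    fix b :: bool
    let ?B = "{\<omega>. \<omega> i = b}"
    have "prefix_determined (Suc i) ?B"
      by (auto simp: prefix_determined_def)
    then have B: "?B = \<Union>((\<lambda>\<omega>. cyl \<omega> (Suc i)) ` ?B)"
      by (rule prefix_determined_eq_Union_cyls)
    have "(\<lambda>u. sample_path Q u i) -` {b} \<inter> space uniform_seq = sample_path Q -` ?B \<inter> space uniform_seq"
      by auto
    also have "\<dots> = sample_path Q -` \<Union>((\<lambda>\<omega>. cyl \<omega> (Suc i)) ` ?B) \<inter> space uniform_seq"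
      by (simp only: B[symmetric])
    also have "\<dots> = (\<Union>C\<in>(\<lambda>\<omega>. cyl \<omega> (Suc i)) ` ?B. sample_path Q -` C \<inter> space uniform_seq)"
      by (simp only: vimage_Union space_uniform_seq Int_UNIV_right)
    also have "\<dots> \<in> sets uniform_seq"
      by (intro sets.finite_UN finite_cyls) (use sets_vimage_sample_path_cyl[OF Q] in auto)
    finally show "(\<lambda>u. sample_path Q u i) -` {b} \<inter> space uniform_seq \<in> sets uniform_seq" .
  qed auto
qed auto

lemma exists_Seq_measure_with_cyl:
  assumes Q: "\<And>\<omega> \<omega>' n. \<omega>' \<in> cyl \<omega> n \<Longrightarrow> Q \<omega>' n = Q \<omega> n"
  shows "\<exists>M. sets M = sets Seq \<and> prob_space M \<and>
     (\<forall>\<omega> t. emeasure M (cyl \<omega> t) = ennreal (\<Prod>n<t. pmf (Q \<omega> n) (\<omega> n)))"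
proof (intro exI conjI allI)
  let ?M = "distr uniform_seq Seq (sample_path Q)"
  show "sets ?M = sets Seq"
    by simp
  show "prob_space ?M"
    by (rule prob_space.prob_space_distr[OF prob_space_uniform_seq measurable_sample_path[OF Q]])
  fix \<omega> t
  have "emeasure ?M (cyl \<omega> t) = emeasure uniform_seq (sample_path Q -` cyl \<omega> t \<inter> space uniform_seq)"
    by (rule emeasure_distr[OF measurable_sample_path[OF Q] sets_Seq_cyl])
  also have "\<dots> = emeasure uniform_seq (prod_emb UNIV (\<lambda>_. uniform_measure lborel {0..1}) {..<t}
      (\<Pi>\<^sub>E n\<in>{..<t}. {x. (x < pmf (Q \<omega> n) True) = \<omega> n}))"
    by (simp only: vimage_sample_path_cyl[OF Q])
  also have "\<dots> = (\<Prod>n<t. emeasure (uniform_measure lborel {0..1}) {x. (x < pmf (Q \<omega> n) True) = \<omega> n})"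
    unfolding uniform_seq_def
    by (rule emeasure_PiM_emb) (auto intro: prob_space_uniform_measure)
  also have "\<dots> = (\<Prod>n<t. ennreal (pmf (Q \<omega> n) (\<omega> n)))"
    by (intro prod.cong refl, subst emeasure_uniform_below) (auto simp: pmf_le_1 pmf_False_conv_True)
  also have "\<dots> = ennreal (\<Prod>n<t. pmf (Q \<omega> n) (\<omega> n))"
    by (simp add: prod_ennreal)
  finally show "emeasure ?M (cyl \<omega> t) = ennreal (\<Prod>n<t. pmf (Q \<omega> n) (\<omega> n))" .
qed

lemma emeasure_Collect_neg_eq_0_if_AE:
  assumes "AE x in M. P x"
  shows "emeasure M {x \<in> space M. \<not> P x} = 0"
proof -
  from assms obtain N where "{x \<in> space M. \<not> P x} \<subseteq> N" "emeasure M N = 0" "N \<in> sets M"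
    by (rule AE_E)
  then show ?thesis
    using emeasure_mono[of "{x \<in> space M. \<not> P x}" N M] by simp
qed

lemma hist_cong: "\<omega>' \<in> cyl \<omega> n \<Longrightarrow> hist f0 f1 \<omega>' n = hist f0 f1 \<omega> n"
  by (induction n) auto

definition likelihood :: "strategy \<Rightarrow> strategy \<Rightarrow> nat \<Rightarrow> (nat \<Rightarrow> bool) \<Rightarrow> nat \<Rightarrow> real" where
  "likelihood f0 f1 i \<omega> t = (\<Prod>n<t. pmf (sel f0 f1 i (hist f0 f1 \<omega> n)) (\<omega> n))"

lemma Pf_characterization:
  "sets (Pf f0 f1 i) = sets Seq \<and> prob_space (Pf f0 f1 i) \<and>
    (\<forall>\<omega> t. emeasure (Pf f0 f1 i) (cyl \<omega> t) = ennreal (likelihood f0 f1 i \<omega> t))"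
proof -
  let ?Q = "\<lambda>\<omega> n. sel f0 f1 i (hist f0 f1 \<omega> n)"
  let ?prop = "\<lambda>M. sets M = sets Seq \<and> prob_space M \<and>
    (\<forall>\<omega> t. emeasure M (cyl \<omega> t) = ennreal (\<Prod>n<t. pmf (?Q \<omega> n) (\<omega> n)))"
  have "\<exists>M. ?prop M"
    by (rule exists_Seq_measure_with_cyl) (rule arg_cong[OF hist_cong])
  moreover have "M = N" if "?prop M" "?prop N" for M N
    using that by (intro Seq_measure_eqI) (auto simp: prob_space_def)
  ultimately have "\<exists>!M. ?prop M"
    by (rule ex_ex1I)
  then have "?prop (Pf f0 f1 i)"
    unfolding Pf_def by (rule theI')
  then show ?thesis
    by (simp add: likelihood_def)
qed

lemma sets_Pf [simp]: "sets (Pf f0 f1 i) = sets Seq"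
  and prob_space_Pf: "prob_space (Pf f0 f1 i)"
  and emeasure_Pf_cyl: "emeasure (Pf f0 f1 i) (cyl \<omega> t) = ennreal (likelihood f0 f1 i \<omega> t)"
  using Pf_characterization by blast+

lemma finite_measure_Pf: "finite_measure (Pf f0 f1 i)"
  using prob_space_Pf by (rule prob_space.finite_measure)

lemma space_Pf [simp]: "space (Pf f0 f1 i) = UNIV"
  using sets_eq_imp_space_eq[OF sets_Pf] by simp

lemma likelihood_nonneg: "0 \<le> likelihood f0 f1 i \<omega> t"
  by (simp add: likelihood_def prod_nonneg)

lemma Dt_eq_likelihood: "Dt f0 f1 j k \<omega> t = likelihood f0 f1 k \<omega> t / likelihood f0 f1 j \<omega> t"
  by (simp add: Dt_def likelihood_def prod_dividef)

lemma pmf_pos_iff_likelihood_pos: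
  "(\<forall>n. 0 < pmf (sel f0 f1 i (hist f0 f1 \<omega> n)) (\<omega> n)) \<longleftrightarrow> (\<forall>t. 0 < likelihood f0 f1 i \<omega> t)"
proof
  assume "\<forall>t. 0 < likelihood f0 f1 i \<omega> t"
  then have "likelihood f0 f1 i \<omega> (Suc n) \<noteq> 0" for n
    by (metis less_irrefl)
  then show "\<forall>n. 0 < pmf (sel f0 f1 i (hist f0 f1 \<omega> n)) (\<omega> n)"
    by (auto simp: likelihood_def order_less_le)
qed (simp add: likelihood_def prod_pos)

lemma deriv_is_0_iff:
  "deriv_is f0 f1 j k \<omega> 0 \<longleftrightarrow> (\<forall>t. 0 < likelihood f0 f1 j \<omega> t) \<and> Dt f0 f1 j k \<omega> \<longlonglongrightarrow> 0"
proof (cases "\<forall>t. 0 < likelihood f0 f1 j \<omega> t")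
  case True
  then have "deriv_is f0 f1 j k \<omega> 0 \<longleftrightarrow>
      limsup (\<lambda>t. ereal (Dt f0 f1 j k \<omega> t)) = 0 \<and> liminf (\<lambda>t. ereal (Dt f0 f1 j k \<omega> t)) = 0"
    by (auto simp: deriv_is_def upperD_def lowerD_def pmf_pos_iff_likelihood_pos zero_ereal_def)
  also have "\<dots> \<longleftrightarrow> (\<lambda>t. ereal (Dt f0 f1 j k \<omega> t)) \<longlonglongrightarrow> 0"
    by (auto simp: tendsto_iff_Liminf_eq_Limsup intro: lim_imp_Limsup lim_imp_Liminf)
  finally show ?thesis
    using True by (simp add: lim_ereal zero_ereal_def)
next
  case False
  then show ?thesis
    by (auto simp: deriv_is_def upperD_def pmf_pos_iff_likelihood_pos)
qed

lemma emeasure_Pf_cyl_ratio_ge_iff: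
  assumes "0 \<le> c"
  shows "ennreal c * emeasure (Pf f0 f1 j) (cyl \<omega> s) \<le> emeasure (Pf f0 f1 k) (cyl \<omega> s) \<longleftrightarrow>
    c * likelihood f0 f1 j \<omega> s \<le> likelihood f0 f1 k \<omega> s"
  using assms by (simp add: emeasure_Pf_cyl likelihood_nonneg ennreal_le_iff flip: ennreal_mult)

lemma deriv_zero_imp_cyl_ratio_unbounded:
  assumes "deriv_is f0 f1 j k \<omega> 0"
  shows "\<omega> \<in> cyl_ratio_unbounded (Pf f0 f1 k) (Pf f0 f1 j)"
  unfolding cyl_ratio_unbounded_def
proof (intro CollectI allI)
  fix M :: nat
  from assms have pos: "\<And>t. 0 < likelihood f0 f1 j \<omega> t" and "Dt f0 f1 j k \<omega> \<longlonglongrightarrow> 0"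
    by (auto simp: deriv_is_0_iff)
  from this(2) have "(\<lambda>t. real M * Dt f0 f1 j k \<omega> t) \<longlonglongrightarrow> 0"
    by (rule tendsto_mult_right_zero)
  then have "\<forall>\<^sub>F t in sequentially. real M * Dt f0 f1 j k \<omega> t < 1"
    by (rule order_tendstoD) simp
  then obtain s where "real M * Dt f0 f1 j k \<omega> s < 1"
    by (auto simp: eventually_sequentially)
  with pos[of s] have "real M * likelihood f0 f1 k \<omega> s \<le> likelihood f0 f1 j \<omega> s"
    by (simp add: Dt_eq_likelihood field_simps)
  then show "\<exists>s. of_nat M * emeasure (Pf f0 f1 k) (cyl \<omega> s) \<le> emeasure (Pf f0 f1 j) (cyl \<omega> s)"
    by (auto simp: ennreal_of_nat_eq_real_of_nat emeasure_Pf_cyl_ratio_ge_iff)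
qed

lemma AE_not_deriv_zero: "AE \<omega> in Pf f0 f1 k. \<not> deriv_is f0 f1 j k \<omega> 0"
proof (rule AE_I')
  show "cyl_ratio_unbounded (Pf f0 f1 k) (Pf f0 f1 j) \<in> null_sets (Pf f0 f1 k)"
    by (simp add: null_sets_def emeasure_cyl_ratio_unbounded finite_measure_Pf)
qed (auto intro: deriv_zero_imp_cyl_ratio_unbounded)

lemma Dt_tendsto_0_if_not_cyl_ratio_often_ge:
  assumes pos: "\<And>t. 0 < likelihood f0 f1 j \<omega> t"
    and not_often: "\<And>m::nat. \<omega> \<notin> cyl_ratio_often_ge (1 / Suc m) (Pf f0 f1 j) (Pf f0 f1 k)"
  shows "Dt f0 f1 j k \<omega> \<longlonglongrightarrow> 0"
proof (rule order_tendstoI)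
  fix \<epsilon> :: real assume "0 < \<epsilon>"
  then obtain m where m: "1 / Suc m < \<epsilon>"
    using reals_Archimedean by (auto simp: inverse_eq_divide)
  from not_often[of m] obtain n where "\<forall>s\<ge>n. \<not> ennreal (1 / Suc m) * emeasure (Pf f0 f1 j) (cyl \<omega> s)
      \<le> emeasure (Pf f0 f1 k) (cyl \<omega> s)"
    unfolding cyl_ratio_often_ge_def by blast
  then have "\<forall>s\<ge>n. likelihood f0 f1 k \<omega> s < 1 / Suc m * likelihood f0 f1 j \<omega> s"
    by (simp add: emeasure_Pf_cyl_ratio_ge_iff not_le)
  with pos m have "\<forall>s\<ge>n. Dt f0 f1 j k \<omega> s < \<epsilon>"
    by (auto simp: Dt_eq_likelihood divide_less_eq intro: order.strict_trans)
  then show "\<forall>\<^sub>F t in sequentially. Dt f0 f1 j k \<omega> t < \<epsilon>"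
    by (auto simp: eventually_sequentially)
next
  fix \<epsilon> :: real assume "\<epsilon> < 0"
  then show "\<forall>\<^sub>F t in sequentially. \<epsilon> < Dt f0 f1 j k \<omega> t"
    using likelihood_nonneg[of f0 f1]
    by (intro always_eventually allI) (simp add: Dt_eq_likelihood order.strict_trans2)
qed

lemma AE_deriv_zero_on_null_set:
  assumes "A \<in> sets Seq" "emeasure (Pf f0 f1 k) A = 0"
  shows "AE \<omega> in Pf f0 f1 j. \<omega> \<in> A \<longrightarrow> deriv_is f0 f1 j k \<omega> 0"
proof -
  let ?often = "\<lambda>m::nat. cyl_ratio_often_ge (1 / Suc m) (Pf f0 f1 j) (Pf f0 f1 k)"
  have "AE \<omega> in Pf f0 f1 j. \<forall>m. \<omega> \<notin> A \<inter> ?often m"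
  proof (subst AE_all_countable, intro allI AE_I')
    fix m
    show "A \<inter> ?often m \<in> null_sets (Pf f0 f1 j)"
      using assms
      by (simp add: null_sets_def emeasure_cyl_ratio_often_ge_on_null_set finite_measure_Pf)
  qed auto
  moreover have "AE \<omega> in Pf f0 f1 j. \<forall>s. emeasure (Pf f0 f1 j) (cyl \<omega> s) \<noteq> 0"
    by (rule AE_emeasure_cyl_neq_0) simp
  ultimately show ?thesis
  proof eventually_elim
    case (elim \<omega>)
    have pos: "0 < likelihood f0 f1 j \<omega> t" for t
      using elim(2) likelihood_nonneg[of f0 f1 j \<omega> t] by (metis emeasure_Pf_cyl ennreal_0 order_less_le)
    show ?case
      using Dt_tendsto_0_if_not_cyl_ratio_often_ge[OF pos] elim(1) pos
      by (auto simp: deriv_is_0_iff)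
  qed
qed

lemma sets_Seq_test_eq [measurable]:
  assumes "comparison_test T"
  shows "{\<omega>. T \<omega> f0 f1 = x} \<in> sets Seq"
proof -
  have "(\<lambda>\<omega>. T \<omega> f0 f1) \<in> borel_measurable Seq"
    using assms by (simp add: comparison_test_def)
  from measurable_sets[OF this, of "{x}"] show ?thesis
    by (simp add: vimage_def)
qed

lemma AE_test_neq_wrong_verdict:
  assumes "comparison_test T" "error_free T" "i \<le> 1"
  shows "AE \<omega> in Pf f0 f1 i. T \<omega> f0 f1 \<noteq> real (1 - i)"
proof (rule AE_I')
  have "emeasure (Pf f0 f1 (1 - (1 - i))) {\<omega> \<in> space Seq. T \<omega> f0 f1 = real (1 - i)} = 0"
    using assms(2) diff_le_self unfolding error_free_def by blast
  moreover have "1 - (1 - i) = i"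
    using assms(3) by simp
  ultimately show "{\<omega>. T \<omega> f0 f1 = real (1 - i)} \<in> null_sets (Pf f0 f1 i)"
    using sets_Seq_test_eq[OF assms(1)] by (simp add: null_sets_def)
qed auto

lemma AE_not_deriv_zero_unless_test_eq:
  assumes "comparison_test T" "reasonable T" "i \<le> 1"
  shows "AE \<omega> in Pf f0 f1 i. T \<omega> f0 f1 \<noteq> real i \<longrightarrow> \<not> deriv_is f0 f1 i (1 - i) \<omega> 0"
proof (rule AE_I')
  let ?B = "cyl_ratio_unbounded (Pf f0 f1 (1 - i)) (Pf f0 f1 i) - {\<omega>. T \<omega> f0 f1 = real i}"
  have B: "?B \<in> sets Seq"
    using assms(1) by measurable
  have "emeasure (Pf f0 f1 (1 - i)) ?B \<le>
      emeasure (Pf f0 f1 (1 - i)) (cyl_ratio_unbounded (Pf f0 f1 (1 - i)) (Pf f0 f1 i))"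
    by (rule emeasure_mono) auto
  then have "emeasure (Pf f0 f1 (1 - i)) ?B = 0"
    by (simp add: emeasure_cyl_ratio_unbounded finite_measure_Pf)
  then have "emeasure (Pf f0 f1 i) ?B > 0 \<Longrightarrow>
      emeasure (Pf f0 f1 i) (?B \<inter> {\<omega> \<in> space Seq. T \<omega> f0 f1 = real i}) > 0"
    using assms(2,3) B unfolding reasonable_def by blast
  moreover have "?B \<inter> {\<omega> \<in> space Seq. T \<omega> f0 f1 = real i} = {}"
    by blast
  ultimately show "?B \<in> null_sets (Pf f0 f1 i)"
    using B by (auto simp: null_sets_def zero_less_iff_neq_zero)
qed (auto dest: deriv_zero_imp_cyl_ratio_unbounded)

lemma derivTest_eq:
  assumes "i \<le> 1" "x \<in> {0, 1/2, 1}" "x \<noteq> real (1 - i)"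
    and "x = real i \<Longrightarrow> deriv_is f0 f1 i (1 - i) \<omega> 0"
    and "x \<noteq> real i \<Longrightarrow> \<not> deriv_is f0 f1 i (1 - i) \<omega> 0"
    and "\<not> deriv_is f0 f1 (1 - i) i \<omega> 0"
  shows "derivTest \<omega> f0 f1 = x"
proof -
  from \<open>i \<le> 1\<close> consider "i = 0" | "i = 1"
    by linarith
  then show ?thesis
    using assms by cases (auto simp: derivTest_def)
qed

lemma test_equiv_derivTest_if_error_free:
  assumes "comparison_test T" "error_free T" "reasonable T"
  shows "test_equiv T derivTest"
  unfolding test_equiv_def
proof (intro allI impI)
  fix f0 f1 i assume "i \<le> (1::nat)"
  have "emeasure (Pf f0 f1 (1 - i)) {\<omega>. T \<omega> f0 f1 = real i} = 0"
    using assms(2) \<open>i \<le> 1\<close> unfolding error_free_def by auto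
  from AE_deriv_zero_on_null_set[OF sets_Seq_test_eq[OF assms(1)] this]
  have "AE \<omega> in Pf f0 f1 i. T \<omega> f0 f1 = real i \<longrightarrow> deriv_is f0 f1 i (1 - i) \<omega> 0"
    by simp
  then have "AE \<omega> in Pf f0 f1 i. T \<omega> f0 f1 = derivTest \<omega> f0 f1"
    using AE_test_neq_wrong_verdict[OF assms(1,2) \<open>i \<le> 1\<close>] AE_not_deriv_zero[where j="1 - i" and k=i]
      AE_not_deriv_zero_unless_test_eq[OF assms(1,3) \<open>i \<le> 1\<close>]
  proof eventually_elim
    case (elim \<omega>)
    have "T \<omega> f0 f1 \<in> {0, 1/2, 1}"
      using assms(1) by (simp add: comparison_test_def)
    with elim show ?case
      using derivTest_eq[OF \<open>i \<le> 1\<close>] by metis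
  qed
  then show "emeasure (Pf f0 f1 i) {\<omega> \<in> space Seq. T \<omega> f0 f1 \<noteq> derivTest \<omega> f0 f1} = 0"
    using emeasure_Collect_neg_eq_0_if_AE by fastforce
qed

theorem theorem2:
  fixes T :: test
  assumes "comparison_test T"
    and "anonymous T"
    and "non_counterfactual T"
    and "reasonable T"
    and "\<not> test_equiv T derivTest"
  shows "\<not> error_free T"
  using test_equiv_derivTest_if_error_free assms(1,4,5) by blast

end
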